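(* Let $\{h_m\}$ be a sequence of support functions of convex bodies in $\mathbb R^n$ that converges uniformly on $\mathbb S^{n-1}$ to a support function $h$. Then, for every $0<\alpha<1$, $h_m\to h$ in the $C^\alpha(\mathbb S^{n-1})$ norm.
   Context: The support function of a convex body $K$ is $h_K(x)=\max_{y\in K}\langle x,y\rangle$; $C^\alpha(\mathbb S^{n-1})$ is the space of $\alpha$-Hölder continuous functions on the sphere with the norm $\|f\|_{C^0}+\sup_{x\neq y}\frac{|f(x)-f(y)|}{|x-y|^\alpha}$. *)

theory Defs
  imports "HOL-Analysis.Analysis"
begin

definition convex_body :: "'a::euclidean_space set \<Rightarrow> bool" where
  "convex_body K \<longleftrightarrow> compact K \<and> convex K \<and> interior K \<noteq> {}"

definition support_fun :: "'a::euclidean_space set \<Rightarrow> 'a \<Rightarrow> real" where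
  "support_fun K x = (SUP y\<in>K. inner x y)"

definition holder_quotients :: "real \<Rightarrow> ('a::euclidean_space \<Rightarrow> real) \<Rightarrow> real set" where
  "holder_quotients \<alpha> f =
     {\<bar>f x - f y\<bar> / (norm (x - y) powr \<alpha>) | x y. x \<in> sphere 0 1 \<and> y \<in> sphere 0 1 \<and> x \<noteq> y}"

definition holder_on_sphere :: "real \<Rightarrow> ('a::euclidean_space \<Rightarrow> real) \<Rightarrow> bool" where
  "holder_on_sphere \<alpha> f \<longleftrightarrow> continuous_on (sphere 0 1) f \<and> bdd_above (holder_quotients \<alpha> f)"

definition holder_norm :: "real \<Rightarrow> ('a::euclidean_space \<Rightarrow> real) \<Rightarrow> real" where
  "holder_norm \<alpha> f = (SUP x\<in>sphere 0 1. \<bar>f x\<bar>) + Sup (holder_quotients \<alpha> f)"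

end

theory Submission
  imports Defs
begin

text \<open>
  A support function of a set contained in the ball of radius \<open>R\<close> is \<open>R\<close>-Lipschitz, and
  uniform convergence \<open>h\<^sub>K\<^sub>m \<rightarrow> h\<^sub>L\<close> on the sphere forces the bodies \<open>K\<^sub>m\<close> to lie eventually in a
  fixed ball, since \<open>\<bar>z\<bar> \<le> h\<^sub>K(z/\<bar>z\<bar>)\<close> for \<open>z \<in> K\<close>. So the differences \<open>f\<^sub>m = h\<^sub>K\<^sub>m - h\<^sub>L\<close> are
  eventually \<open>C\<close>-Lipschitz for one constant \<open>C\<close>, while their sup norms \<open>e\<^sub>m\<close> tend to \<open>0\<close>.
  Interpolating between the two bounds \<open>\<bar>f(x) - f(y)\<bar> \<le> 2e\<close> and \<open>\<bar>f(x) - f(y)\<bar> \<le> C\<bar>x - y\<bar>\<close>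
  gives the Hoelder seminorm bound \<open>(2e)^(1 - \<alpha>) C^\<alpha>\<close>, which tends to \<open>0\<close> because \<open>\<alpha> < 1\<close>.
\<close>

lemma convex_body_imp_bounded: "convex_body K \<Longrightarrow> bounded K"
  unfolding convex_body_def by (simp add: compact_imp_bounded)

lemma convex_body_nonempty: "convex_body K \<Longrightarrow> K \<noteq> {}"
  unfolding convex_body_def by auto

lemma inner_le_support_fun:
  fixes K :: "'a::euclidean_space set"
  assumes "bounded K" and "z \<in> K"
  shows "inner x z \<le> support_fun K x"
  unfolding support_fun_def
  using cSUP_upper[OF assms(2) bounded_inner_imp_bdd_above[OF assms(1), of x]]
  by (simp add: inner_commute)

lemma support_fun_le_norm:
  fixes K :: "'a::euclidean_space set"
  assumes "K \<noteq> {}" and "\<And>z. z \<in> K \<Longrightarrow> norm z \<le> R"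
  shows "support_fun K x \<le> R * norm x"
  unfolding support_fun_def
proof (rule cSUP_least[OF assms(1)])
  fix z assume "z \<in> K"
  have "inner x z \<le> norm x * norm z" by (rule norm_cauchy_schwarz)
  also have "\<dots> \<le> norm x * R" using assms(2)[OF \<open>z \<in> K\<close>] by (simp add: mult_left_mono)
  finally show "inner x z \<le> R * norm x" by (simp add: mult.commute)
qed

lemma support_fun_add_le:
  fixes K :: "'a::euclidean_space set"
  assumes "bounded K" and "K \<noteq> {}"
  shows "support_fun K (x + y) \<le> support_fun K x + support_fun K y"
  unfolding support_fun_def[of K "x + y"]
proof (rule cSUP_least[OF assms(2)])
  fix z assume "z \<in> K"
  then show "inner (x + y) z \<le> support_fun K x + support_fun K y"
    using inner_le_support_fun[OF assms(1)] by (simp add: inner_add_left add_mono)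
qed

lemma lipschitz_on_support_fun:
  fixes K :: "'a::euclidean_space set"
  assumes "K \<noteq> {}" and R: "\<And>z. z \<in> K \<Longrightarrow> norm z \<le> R"
  shows "R-lipschitz_on S (support_fun K)"
proof (rule lipschitz_onI)
  have "bounded K" using R by (auto simp: bounded_iff)
  have half: "support_fun K x - support_fun K y \<le> R * norm (x - y)" for x y
    using support_fun_add_le[OF \<open>bounded K\<close> assms(1), of y "x - y"]
      support_fun_le_norm[OF assms, of "x - y"] by simp
  show "dist (support_fun K x) (support_fun K y) \<le> R * dist x y" for x y
    using half[of x y] half[of y x] by (simp add: dist_real_def dist_norm norm_minus_commute abs_le_iff)
  show "0 \<le> R" using assms by (meson norm_ge_zero order_trans ex_in_conv)
qed

lemma norm_le_if_support_fun_le_on_sphere: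
  fixes K :: "'a::euclidean_space set"
  assumes "bounded K" and "z \<in> K" and "\<And>u. u \<in> sphere 0 1 \<Longrightarrow> support_fun K u \<le> R"
  shows "norm z \<le> R"
proof -
  obtain u :: 'a where u: "u \<in> sphere 0 1" "inner u z = norm z"
  proof (cases "z = 0")
    case True
    obtain b :: 'a where "b \<in> Basis" using nonempty_Basis by blast
    with True show ?thesis by (intro that[of b]) auto
  next
    case False
    then show ?thesis
      by (intro that[of "sgn z"]) (auto simp: sgn_div_norm norm_sgn dot_square_norm power2_eq_square)
  qed
  then show ?thesis using inner_le_support_fun[OF assms(1,2), of u] assms(3)[OF u(1)] by simp
qed

lemma powr_interpolation:
  fixes a b d \<alpha> :: real
  assumes "0 \<le> d" "d \<le> a" "d \<le> b" "0 \<le> \<alpha>" "\<alpha> \<le> 1"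
  shows "d \<le> a powr (1 - \<alpha>) * b powr \<alpha>"
proof (cases "d = 0")
  case True
  then show ?thesis by simp
next
  case False
  then have "d = d powr (1 - \<alpha>) * d powr \<alpha>"
    using assms(1) by (simp add: powr_add[symmetric])
  also have "\<dots> \<le> a powr (1 - \<alpha>) * b powr \<alpha>"
    using assms by (intro mult_mono powr_mono2) auto
  finally show ?thesis .
qed

lemma holder_quotients_nonempty: "holder_quotients \<alpha> (f :: 'a::euclidean_space \<Rightarrow> real) \<noteq> {}"
proof -
  obtain u :: 'a where "u \<in> Basis" using nonempty_Basis by blast
  then have "u \<in> sphere 0 1" "- u \<in> sphere 0 1" "u \<noteq> - u"
    by (auto simp: eq_neg_iff_add_eq_0 simp flip: scaleR_2)
  then show ?thesis unfolding holder_quotients_def by blast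
qed

lemma holder_quotients_nonneg: "q \<in> holder_quotients \<alpha> f \<Longrightarrow> 0 \<le> q"
  unfolding holder_quotients_def by auto

lemma holder_quotient_le_interpolation:
  fixes f :: "'a::euclidean_space \<Rightarrow> real"
  assumes lip: "C-lipschitz_on (sphere 0 1) f" and bound: "\<And>x. x \<in> sphere 0 1 \<Longrightarrow> \<bar>f x\<bar> \<le> e"
    and "0 \<le> \<alpha>" "\<alpha> \<le> 1" and "q \<in> holder_quotients \<alpha> f"
  shows "q \<le> (2 * e) powr (1 - \<alpha>) * C powr \<alpha>"
proof -
  obtain x y where xy: "x \<in> sphere 0 1" "y \<in> sphere 0 1" "x \<noteq> y"
    and q: "q = \<bar>f x - f y\<bar> / norm (x - y) powr \<alpha>"
    using assms(5) unfolding holder_quotients_def by blast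
  have "0 < norm (x - y)" using xy by simp
  have "\<bar>f x - f y\<bar> \<le> (2 * e) powr (1 - \<alpha>) * (C * norm (x - y)) powr \<alpha>"
  proof (rule powr_interpolation)
    show "\<bar>f x - f y\<bar> \<le> 2 * e" using bound[OF xy(1)] bound[OF xy(2)] by linarith
    show "\<bar>f x - f y\<bar> \<le> C * norm (x - y)"
      using lipschitz_onD[OF lip xy(1,2)] by (simp add: dist_real_def dist_norm)
  qed (use assms in auto)
  also have "\<dots> = (2 * e) powr (1 - \<alpha>) * C powr \<alpha> * norm (x - y) powr \<alpha>"
    using lipschitz_on_nonneg[OF lip] by (simp add: powr_mult)
  finally show ?thesis
    using \<open>0 < norm (x - y)\<close> by (simp add: q pos_divide_le_eq)
qed

lemma bdd_above_abs_image_sphere: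
  fixes f :: "'a::euclidean_space \<Rightarrow> real"
  assumes "continuous_on (sphere 0 1) f"
  shows "bdd_above ((\<lambda>x. \<bar>f x\<bar>) ` sphere 0 1)"
proof -
  have "bounded (f ` sphere 0 1)"
    using compact_continuous_image[OF assms compact_sphere] by (rule compact_imp_bounded)
  then show ?thesis
    using bounded_norm_comp[of f "sphere 0 1"] by (simp add: bounded_imp_bdd_above)
qed

lemma SUP_abs_sphere_nonneg:
  fixes f :: "'a::euclidean_space \<Rightarrow> real"
  assumes "continuous_on (sphere 0 1) f"
  shows "0 \<le> (SUP x\<in>sphere 0 1. \<bar>f x\<bar>)"
proof -
  obtain u :: 'a where "u \<in> Basis" using nonempty_Basis by blast
  then have "u \<in> sphere 0 1" by simp
  from cSUP_upper[OF this bdd_above_abs_image_sphere[OF assms]] show ?thesis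
    by (meson abs_ge_zero order_trans)
qed

lemma holder_norm_nonneg:
  assumes "holder_on_sphere \<alpha> (f :: 'a::euclidean_space \<Rightarrow> real)"
  shows "0 \<le> holder_norm \<alpha> f"
proof -
  obtain q where "q \<in> holder_quotients \<alpha> f"
    using holder_quotients_nonempty by blast
  then have "0 \<le> Sup (holder_quotients \<alpha> f)"
    using assms holder_quotients_nonneg unfolding holder_on_sphere_def by (meson cSup_upper order_trans)
  with assms show ?thesis
    unfolding holder_norm_def holder_on_sphere_def by (simp add: SUP_abs_sphere_nonneg)
qed

lemma
  fixes f :: "'a::euclidean_space \<Rightarrow> real"
  assumes lip: "C-lipschitz_on (sphere 0 1) f" and "0 \<le> \<alpha>" "\<alpha> \<le> 1"
  defines "e \<equiv> SUP x\<in>sphere 0 1. \<bar>f x\<bar>"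
  shows lipschitz_imp_holder_on_sphere: "holder_on_sphere \<alpha> f"
    and holder_norm_le_interpolation: "holder_norm \<alpha> f \<le> e + (2 * e) powr (1 - \<alpha>) * C powr \<alpha>"
proof -
  have cont: "continuous_on (sphere 0 1) f" using lip by (rule lipschitz_on_continuous_on)
  have "\<bar>f x\<bar> \<le> e" if "x \<in> sphere 0 1" for x
    unfolding e_def using that bdd_above_abs_image_sphere[OF cont] by (rule cSUP_upper)
  then have quotient_le: "q \<le> (2 * e) powr (1 - \<alpha>) * C powr \<alpha>" if "q \<in> holder_quotients \<alpha> f" for q
    using holder_quotient_le_interpolation[OF lip _ assms(2,3) that] by blast
  then have "bdd_above (holder_quotients \<alpha> f)" by (rule bdd_aboveI)
  with cont show "holder_on_sphere \<alpha> f" unfolding holder_on_sphere_def ..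
  have "Sup (holder_quotients \<alpha> f) \<le> (2 * e) powr (1 - \<alpha>) * C powr \<alpha>"
    using holder_quotients_nonempty quotient_le by (rule cSup_least)
  then show "holder_norm \<alpha> f \<le> e + (2 * e) powr (1 - \<alpha>) * C powr \<alpha>"
    unfolding holder_norm_def e_def by simp
qed

lemma tendsto_interpolation_bound:
  fixes e :: "'i \<Rightarrow> real"
  assumes "(e \<longlongrightarrow> 0) F" and "\<And>m. 0 \<le> e m" and "\<alpha> < 1"
  shows "((\<lambda>m. e m + (2 * e m) powr (1 - \<alpha>) * C powr \<alpha>) \<longlongrightarrow> 0) F"
proof -
  have "((\<lambda>m. (2 * e m) powr (1 - \<alpha>)) \<longlongrightarrow> 0) F"
    using tendsto_mult_right_zero[OF assms(1)] assms(2,3) by (intro tendsto_zero_powrI) auto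
  then show ?thesis
    using tendsto_add[OF assms(1) tendsto_mult_left_zero] by simp
qed

lemma tendsto_SUP_dist_uniform_limit:
  assumes "uniform_limit S f g F" and "S \<noteq> {}"
  shows "((\<lambda>n. SUP x\<in>S. dist (f n x) (g x)) \<longlongrightarrow> 0) F"
  unfolding tendsto_iff
proof (intro allI impI)
  fix \<epsilon> :: real assume "0 < \<epsilon>"
  then have "\<forall>\<^sub>F n in F. \<forall>x\<in>S. dist (f n x) (g x) < \<epsilon> / 2"
    using assms(1) half_gt_zero[OF \<open>0 < \<epsilon>\<close>] unfolding uniform_limit_iff by blast
  then show "\<forall>\<^sub>F n in F. dist (SUP x\<in>S. dist (f n x) (g x)) 0 < \<epsilon>"
  proof (rule eventually_mono)
    fix n assume close: "\<forall>x\<in>S. dist (f n x) (g x) < \<epsilon> / 2"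
    then have "bdd_above ((\<lambda>x. dist (f n x) (g x)) ` S)"
      by (intro bdd_aboveI2[where M="\<epsilon> / 2"]) (simp add: less_imp_le)
    then have "0 \<le> (SUP x\<in>S. dist (f n x) (g x))"
      using assms(2) by (meson cSUP_upper ex_in_conv order_trans zero_le_dist)
    moreover have "(SUP x\<in>S. dist (f n x) (g x)) \<le> \<epsilon> / 2"
      using assms(2) close by (intro cSUP_least) (auto simp: less_imp_le)
    ultimately show "dist (SUP x\<in>S. dist (f n x) (g x)) 0 < \<epsilon>"
      using \<open>0 < \<epsilon>\<close> by simp
  qed
qed

lemma eventually_norm_le_if_uniform_limit_support_fun:
  fixes K :: "'i \<Rightarrow> 'a::euclidean_space set"
  assumes lim: "uniform_limit (sphere 0 1) (\<lambda>m. support_fun (K m)) (support_fun L) F"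
    and "\<And>m. bounded (K m)" and "L \<noteq> {}" and "\<And>z. z \<in> L \<Longrightarrow> norm z \<le> R"
  shows "\<forall>\<^sub>F m in F. \<forall>z\<in>K m. norm z \<le> R + 1"
proof -
  have "\<forall>\<^sub>F m in F. \<forall>u\<in>sphere 0 1. dist (support_fun (K m) u) (support_fun L u) < 1"
    using lim unfolding uniform_limit_iff by simp
  then show ?thesis
  proof (rule eventually_mono)
    fix m assume close: "\<forall>u\<in>sphere 0 1. dist (support_fun (K m) u) (support_fun L u) < 1"
    have "support_fun (K m) u \<le> R + 1" if "u \<in> sphere 0 1" for u
      using close that support_fun_le_norm[OF assms(3,4), of u] by (force simp: dist_real_def)
    then show "\<forall>z\<in>K m. norm z \<le> R + 1"
      using norm_le_if_support_fun_le_on_sphere[OF assms(2)] by blast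
  qed
qed

theorem lemma5p7:
  fixes K :: "nat \<Rightarrow> 'a::euclidean_space set" and L :: "'a set" and \<alpha> :: real
  assumes "\<And>m. convex_body (K m)"
    and "convex_body L"
    and "uniform_limit (sphere 0 1) (\<lambda>m. support_fun (K m)) (support_fun L) sequentially"
    and "0 < \<alpha>" and "\<alpha> < 1"
  shows "(\<forall>m. holder_on_sphere \<alpha> (\<lambda>x. support_fun (K m) x - support_fun L x))
    \<and> (\<lambda>m. holder_norm \<alpha> (\<lambda>x. support_fun (K m) x - support_fun L x)) \<longlonglongrightarrow> 0"
proof -
  let ?f = "\<lambda>m x. support_fun (K m) x - support_fun L x"
  define e where "e m = (SUP x\<in>sphere 0 1. \<bar>?f m x\<bar>)" for m
  have K: "bounded (K m)" "K m \<noteq> {}" for m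
    using assms(1) by (simp_all add: convex_body_imp_bounded convex_body_nonempty)
  have L: "L \<noteq> {}" using assms(2) by (rule convex_body_nonempty)
  obtain R where R: "\<And>z. z \<in> L \<Longrightarrow> norm z \<le> R"
    using convex_body_imp_bounded[OF assms(2)] by (auto simp: bounded_iff)
  have lip: "(R' + R)-lipschitz_on (sphere 0 1) (?f m)" if "\<forall>z\<in>K m. norm z \<le> R'" for m R'
    using that by (intro lipschitz_on_diff lipschitz_on_support_fun K L R) auto
  have holder: "holder_on_sphere \<alpha> (?f m)" for m
    using K(1)[of m] lip[THEN lipschitz_imp_holder_on_sphere] assms(4,5)
    by (auto simp: bounded_iff)
  have "\<forall>\<^sub>F m in sequentially. \<forall>z\<in>K m. norm z \<le> R + 1"
    using assms(3) K(1) L R by (rule eventually_norm_le_if_uniform_limit_support_fun)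
  then have bound: "\<forall>\<^sub>F m in sequentially.
      holder_norm \<alpha> (?f m) \<le> e m + (2 * e m) powr (1 - \<alpha>) * (R + 1 + R) powr \<alpha>"
    by eventually_elim (use lip[of _ "R + 1", THEN holder_norm_le_interpolation] assms(4,5) in \<open>simp add: e_def\<close>)
  have e_lim: "e \<longlonglongrightarrow> 0"
    using tendsto_SUP_dist_uniform_limit[OF assms(3)]
    unfolding dist_real_def by (simp add: e_def[abs_def])
  have e_nonneg: "0 \<le> e m" for m
    using holder[of m] unfolding holder_on_sphere_def e_def by (simp add: SUP_abs_sphere_nonneg)
  have rhs_lim: "(\<lambda>m. e m + (2 * e m) powr (1 - \<alpha>) * (R + 1 + R) powr \<alpha>) \<longlonglongrightarrow> 0"
    using e_lim e_nonneg assms(5) by (rule tendsto_interpolation_bound)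
  have "(\<lambda>m. holder_norm \<alpha> (?f m)) \<longlonglongrightarrow> 0"
    by (rule tendsto_sandwich[OF _ bound tendsto_const rhs_lim]) (simp add: holder holder_norm_nonneg)
  with holder show ?thesis by blast
qed

end
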